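(* In the setting of the construction below, the set $\mathbb U$ is dense in $\mathbb U\cup\mathbb P$ (every tree in $\mathbb U\cup\mathbb P$ contains a tree in $\mathbb U$), and the set $\mathbb U\times_{E_0}\mathbb U$ is dense in $(\mathbb P\cup\mathbb U)\times_{E_0}(\mathbb P\cup\mathbb U)$.
   Context: Notation. $2^{<\omega}$ is the set of finite binary strings, $\Lambda$ the empty string, $\mathrm{lh}(s)$ the length of $s$, $2^n$ the set of strings of length $n$, $s\subseteq t$ means $t$ extends $s$, $s^\frown t$ concatenation. For strings $s,t$ with $\mathrm{lh}(s)\le\mathrm{lh}(t)$, $s\cdot t$ is the string of length $\mathrm{lh}(t)$ with $(s\cdot t)(k)=t(k)+s(k)\bmod 2$ for $k<\mathrm{lh}(s)$ and $(s\cdot t)(k)=t(k)$ otherwise; if $\mathrm{lh}(s)>\mathrm{lh}(t)$ then $s\cdot t=(s\restriction\mathrm{lh}(t))\cdot t$. For $T\subseteq 2^{<\omega}$, $s\cdot T=\{s\cdot t:t\in T\}$. For a tree $T$ and $s\in T$, $T\upharpoonright s=\{t\in T:s\subseteq t\lor t\subseteq s\}$. A perfect tree is a nonempty tree $T\subseteq 2^{<\omega}$ with no endpoints and no isolated branches; its stem $\mathrm{stem}(T)$ is the largest $s\in T$ with $T=T\upharpoonright s$. A perfect tree $T$ is large, written $T\in\mathbf{LT}$, if there are nonempty strings $q^i_n$ ($n<\omega$, $i=0,1$) with $\mathrm{lh}(q^0_n)=\mathrm{lh}(q^1_n)\ge1$ and $q^i_n(0)=i$, such that $T$ consists exactly of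 all initial segments of strings $r^\frown q^{i(0)}_0{}^\frown\cdots{}^\frown q^{i(n)}_n$, where $r=\mathrm{stem}(T)$, $n<\omega$, $i(0),\dots,i(n)\in\{0,1\}$. Its splitting levels are $\mathrm{spl}_0(T)=\mathrm{lh}(r)$, $\mathrm{spl}_{n+1}(T)=\mathrm{spl}_n(T)+\mathrm{lh}(q^0_n)$. For $T\in\mathbf{LT}$ and $i\in\{0,1\}$, $T(\to i)=T\upharpoonright(\mathrm{stem}(T)^\frown i)$; for $s\in 2^n$ with $n\ge1$, $T(\to s)=(\cdots((T(\to s(0)))(\to s(1)))\cdots)(\to s(n-1))$, and $T(\to\Lambda)=T$. For $S,T\in\mathbf{LT}$, $S\subseteq_n T$ means $S\subseteq T$ and $\mathrm{spl}_k(S)=\mathrm{spl}_k(T)$ for all $k<n$. A large-tree forcing notion (LTF) is a set $\mathbb P\subseteq\mathbf{LT}$ such that $T\upharpoonright u\in\mathbb P$ whenever $u\in T\in\mathbb P$, and $s\cdot T\in\mathbb P$ whenever $T\in\mathbb P$ and $s\in 2^{<\omega}$; ordered by inclusion. $\mathbf{LC}_n(\mathbb P)$ is the set of $T\in\mathbf{LT}$ with $T(\to s)\in\mathbb P$ for all $s\in 2^n$. For a set $\mathbb Q$ of trees, $\mathbb Q\times_{E_0}\mathbb Q$ is the set of pairs $\langle T,T'\rangle$ of trees in $\mathbb Q$ with $T'=s\cdot T$ for some $s\in2^{<\omega}$, ordered componentwise by inclusion. Multitrees. A multitree is a sequence $\varphi=\langle\langle\tau^\varphi_k,p^\varphi_k\rangle:k<\omega\rangle$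 with $p^\varphi_k\in\omega\cup\{-1\}$, such that the support $|\varphi|=\{k:p^\varphi_k\ne-1\}$ is finite; for $k\in|\varphi|$, $\tau^\varphi_k=\langle T^\varphi_k(0),\dots,T^\varphi_k(p^\varphi_k)\rangle$ with each $T^\varphi_k(n)\in\mathbf{LT}$ and $T^\varphi_k(n)\subseteq_n T^\varphi_k(n-1)$ for $1\le n\le p^\varphi_k$; for $k\notin|\varphi|$, $\tau^\varphi_k$ is empty. $\psi\preccurlyeq\varphi$ means $|\psi|\subseteq|\varphi|$ and for $k\in|\psi|$: $p^\varphi_k\ge p^\psi_k$ and $T^\varphi_k(n)=T^\psi_k(n)$ for all $n\le p^\psi_k$. $\mathbf{MT}(\mathbb P)$ is the set of multitrees $\varphi$ with $T^\varphi_k(n)\in\mathbf{LC}_n(\mathbb P)$ for all $k\in|\varphi|$, $n\le p^\varphi_k$. Construction. $\mathrm{ZFC}'$ is ZFC without the power set axiom plus the axiom that $\mathcal P(\omega)$ exists. Let $\mathfrak M$ be a countable transitive model of $\mathrm{ZFC}'$ and $\mathbb P\in\mathfrak M$ an LTF. Let $\Phi=\langle\varphi(j):j<\omega\rangle$ be a $\preccurlyeq$-increasing sequence in $\mathbf{MT}(\mathbb P)$ meeting every set $D\in\mathfrak M$, $D\subseteq\mathbf{MT}(\mathbb P)$, which is dense (every $\psi\in\mathbf{MT}(\mathbb P)$ has some $\varphi\in D$ with $\psi\preccurlyeq\varphi$). Then for each $k$ there are trees $T^\Phi_k(n)\in\mathbf{LC}_n(\mathbb P)$, $n<\omega$, with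 $T^\Phi_k(n+1)\subseteq_{n+1}T^\Phi_k(n)$, such that $T^{\varphi(j)}_k(n)=T^\Phi_k(n)$ whenever $k\in|\varphi(j)|$ and $n\le p^{\varphi(j)}_k$. Put $U^\Phi_k=\bigcap_n T^\Phi_k(n)\in\mathbf{LT}$, $U^\Phi_k(s)=U^\Phi_k(\to s)$ for $s\in 2^{<\omega}$, and $\mathbb U=\{\sigma\cdot U^\Phi_k(s):k<\omega,\ s,\sigma\in 2^{<\omega}\}$. *)

theory Defs
  imports Main "HOL-Library.Sublist" "HOL-Library.Countable_Set"
begin

(* Binary strings are bool lists; False = 0, True = 1.  Trees are sets of strings. *)
type_synonym str = "bool list"
type_synonym tree = "bool list set"

definition sdot :: "str \<Rightarrow> str \<Rightarrow> str" where
  "sdot s t = map (\<lambda>k. if k < length s then (s ! k \<noteq> t ! k) else t ! k) [0..<length t]"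

definition sdotT :: "str \<Rightarrow> tree \<Rightarrow> tree" where
  "sdotT s T = sdot s ` T"

definition is_tree :: "tree \<Rightarrow> bool" where
  "is_tree T \<longleftrightarrow> (\<forall>t\<in>T. \<forall>s. prefix s t \<longrightarrow> s \<in> T)"

definition perfect_tree :: "tree \<Rightarrow> bool" where
  "perfect_tree T \<longleftrightarrow> T \<noteq> {} \<and> is_tree T
     \<and> (\<forall>t\<in>T. \<exists>b. t @ [b] \<in> T)
     \<and> (\<forall>t\<in>T. \<exists>u\<in>T. prefix t u \<and> u @ [True] \<in> T \<and> u @ [False] \<in> T)"

definition restr :: "tree \<Rightarrow> str \<Rightarrow> tree" where
  "restr T u = {t\<in>T. prefix u t \<or> prefix t u}"

definition stem :: "tree \<Rightarrow> str" where
  "stem T = (THE s. s \<in> T \<and> T = restr T s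
               \<and> (\<forall>s'. s' \<in> T \<and> T = restr T s' \<longrightarrow> length s' \<le> length s))"

(* q is a witness of largeness: q n i is the string q^i_n *)
definition LT_witness :: "tree \<Rightarrow> (nat \<Rightarrow> bool \<Rightarrow> str) \<Rightarrow> bool" where
  "LT_witness T q \<longleftrightarrow>
     (\<forall>n. length (q n False) = length (q n True) \<and> 1 \<le> length (q n False)
          \<and> (\<forall>i. q n i ! 0 = i))
     \<and> T = {u. \<exists>n (f::nat \<Rightarrow> bool).
                 prefix u (stem T @ concat (map (\<lambda>m. q m (f m)) [0..<Suc n]))}"

definition LT :: "tree set" where
  "LT = {T. perfect_tree T \<and> (\<exists>q. LT_witness T q)}"

definition spl :: "tree \<Rightarrow> nat \<Rightarrow> nat" where
  "spl T n = (let q = (SOME q. LT_witness T q)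
              in length (stem T) + (\<Sum>m<n. length (q m False)))"

definition to1 :: "tree \<Rightarrow> bool \<Rightarrow> tree" where
  "to1 T i = restr T (stem T @ [i])"

fun to :: "tree \<Rightarrow> str \<Rightarrow> tree" where
  "to T [] = T"
| "to T (b # s) = to (to1 T b) s"

definition subn :: "tree \<Rightarrow> nat \<Rightarrow> tree \<Rightarrow> bool" where
  "subn S n T \<longleftrightarrow> S \<subseteq> T \<and> (\<forall>k<n. spl S k = spl T k)"

definition LTF :: "tree set \<Rightarrow> bool" where
  "LTF P \<longleftrightarrow> P \<subseteq> LT
     \<and> (\<forall>T\<in>P. \<forall>u\<in>T. restr T u \<in> P)
     \<and> (\<forall>T\<in>P. \<forall>s. sdotT s T \<in> P)"

definition LC :: "nat \<Rightarrow> tree set \<Rightarrow> tree set" where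
  "LC n P = {T\<in>LT. \<forall>s. length s = n \<longrightarrow> to T s \<in> P}"

definition E0prod :: "tree set \<Rightarrow> (tree \<times> tree) set" where
  "E0prod Q = {(T, T'). T \<in> Q \<and> T' \<in> Q \<and> (\<exists>s. T' = sdotT s T)}"

(* A multitree phi is coded by k \<mapsto> tau_k, a list of trees;
   p_k = length tau_k - 1, with p_k = -1 iff tau_k = [];
   T_k(n) = tau_k ! n. *)
type_synonym multitree = "nat \<Rightarrow> tree list"

definition supp :: "multitree \<Rightarrow> nat set" where
  "supp \<phi> = {k. \<phi> k \<noteq> []}"

definition is_multitree :: "multitree \<Rightarrow> bool" where
  "is_multitree \<phi> \<longleftrightarrow> finite (supp \<phi>)
     \<and> (\<forall>k n. n < length (\<phi> k) \<longrightarrow> \<phi> k ! n \<in> LT)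
     \<and> (\<forall>k n. 1 \<le> n \<and> n < length (\<phi> k) \<longrightarrow> subn (\<phi> k ! n) n (\<phi> k ! (n - 1)))"

definition mt_le :: "multitree \<Rightarrow> multitree \<Rightarrow> bool" where
  "mt_le \<psi> \<phi> \<longleftrightarrow> supp \<psi> \<subseteq> supp \<phi> \<and> (\<forall>k\<in>supp \<psi>. prefix (\<psi> k) (\<phi> k))"

definition MT :: "tree set \<Rightarrow> multitree set" where
  "MT P = {\<phi>. is_multitree \<phi> \<and> (\<forall>k n. n < length (\<phi> k) \<longrightarrow> \<phi> k ! n \<in> LC n P)}"

definition mt_dense :: "tree set \<Rightarrow> multitree set \<Rightarrow> bool" where
  "mt_dense P D \<longleftrightarrow> D \<subseteq> MT P \<and> (\<forall>\<psi>\<in>MT P. \<exists>\<phi>\<in>D. mt_le \<psi> \<phi>)"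

(* T^Phi_k(n): the common value of T^{phi(j)}_k(n) *)
definition TPhi :: "(nat \<Rightarrow> multitree) \<Rightarrow> nat \<Rightarrow> nat \<Rightarrow> tree" where
  "TPhi \<Phi> k n = (SOME T. \<exists>j. n < length (\<Phi> j k) \<and> \<Phi> j k ! n = T)"

definition UPhi :: "(nat \<Rightarrow> multitree) \<Rightarrow> nat \<Rightarrow> tree" where
  "UPhi \<Phi> k = (\<Inter>n. TPhi \<Phi> k n)"

definition UU :: "(nat \<Rightarrow> multitree) \<Rightarrow> tree set" where
  "UU \<Phi> = {sdotT \<sigma> (to (UPhi \<Phi> k) s) | k s \<sigma>. True}"

(* Sets of multitrees that are definable from parameters k, n \<in> \<omega> and T \<in> P
   (together with P), hence belong to any transitive model of ZFC' containing P. *)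
definition D_len :: "tree set \<Rightarrow> nat \<Rightarrow> nat \<Rightarrow> multitree set" where
  "D_len P k n = {\<phi>\<in>MT P. n < length (\<phi> k)}"

definition D_below :: "tree set \<Rightarrow> tree \<Rightarrow> multitree set" where
  "D_below P T = {\<phi>\<in>MT P. \<exists>k\<in>supp \<phi>. \<phi> k ! 0 \<subseteq> T}"

end

theory Submission
  imports Defs
begin

text \<open>
  Every \<open>T \<in> P\<close> contains some \<open>U\<^sup>\<Phi>\<^sub>k\<close>: the multitrees with some \<open>T\<^sub>k(0) \<subseteq> T\<close>
  form a dense set (put \<open>T\<close> itself at a fresh index \<open>k\<close>), so the generic sequence meets
  it, and then \<open>U\<^sup>\<Phi>\<^sub>k \<subseteq> T\<^sup>\<Phi>\<^sub>k(0) \<subseteq> T\<close>.  For a pair \<open>(T, s\<cdot>T)\<close> pick \<open>U \<subseteq> T\<close> in \<open>UU \<Phi>\<close>;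
  then \<open>(U, s\<cdot>U)\<close> lies below it, since \<open>UU \<Phi>\<close> is closed under the action of
  \<open>2\<^sup><\<^sup>\<omega>\<close>: two successive actions amount to a single one.
\<close>

lemma sdotT_Nil [simp]: "sdotT [] T = T"
  unfolding sdotT_def sdot_def by (simp add: map_nth)

lemma sdotT_mono: "S \<subseteq> T \<Longrightarrow> sdotT s S \<subseteq> sdotT s T"
  unfolding sdotT_def by blast

lemma sdot_sdot:
  "sdot s (sdot \<sigma> t)
     = sdot (map (\<lambda>k. (k < length s \<and> s ! k) \<noteq> (k < length \<sigma> \<and> \<sigma> ! k))
               [0..<max (length s) (length \<sigma>)]) t"
  unfolding sdot_def by (rule nth_equalityI) auto

lemma sdotT_sdotT: "\<exists>r. sdotT s (sdotT \<sigma> T) = sdotT r T"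
  unfolding sdotT_def image_image sdot_sdot by blast

lemma E0prod_dense:
  assumes closed: "\<And>U s. U \<in> Q \<Longrightarrow> sdotT s U \<in> Q"
    and dense: "\<And>T. T \<in> R \<Longrightarrow> \<exists>U \<in> Q. U \<subseteq> T"
    and pair: "(T, T') \<in> E0prod R"
  shows "\<exists>(U, U') \<in> E0prod Q. U \<subseteq> T \<and> U' \<subseteq> T'"
proof -
  from pair obtain s where "T \<in> R" and T': "T' = sdotT s T"
    unfolding E0prod_def by auto
  then obtain U where "U \<in> Q" "U \<subseteq> T" using dense by blast
  then have "(U, sdotT s U) \<in> E0prod Q" and "sdotT s U \<subseteq> T'"
    using closed sdotT_mono T' unfolding E0prod_def by auto
  with \<open>U \<subseteq> T\<close> show ?thesis by blast
qed

lemma UPhi_in_UU: "UPhi \<Phi> k \<in> UU \<Phi>"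
  unfolding UU_def by (rule CollectI, intro exI[of _ k] exI[of _ "[]"]) simp

lemma sdotT_in_UU:
  assumes "U \<in> UU \<Phi>"
  shows "sdotT s U \<in> UU \<Phi>"
proof -
  obtain k t \<sigma> where "U = sdotT \<sigma> (to (UPhi \<Phi> k) t)"
    using assms unfolding UU_def by blast
  moreover obtain r where "sdotT s (sdotT \<sigma> (to (UPhi \<Phi> k) t)) = sdotT r (to (UPhi \<Phi> k) t)"
    using sdotT_sdotT by blast
  ultimately show ?thesis unfolding UU_def by auto
qed

lemma mt_le_trans: "mt_le \<phi> \<psi> \<Longrightarrow> mt_le \<psi> \<chi> \<Longrightarrow> mt_le \<phi> \<chi>"
  unfolding mt_le_def by (meson subset_trans in_mono prefix_order.order_trans)

lemma mt_le_chain: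
  assumes "\<And>j. mt_le (\<Phi> j) (\<Phi> (Suc j))" and "i \<le> j"
  shows "mt_le (\<Phi> i) (\<Phi> j)"
  using \<open>i \<le> j\<close>
proof (rule transitive_stepwise_le)
  show "mt_le (\<Phi> i) (\<Phi> i)" for i by (simp add: mt_le_def)
qed (use assms(1) mt_le_trans in blast)+

lemma mt_le_chain_prefix:
  assumes "\<And>j. mt_le (\<Phi> j) (\<Phi> (Suc j))" and "i \<le> j"
  shows "prefix (\<Phi> i k) (\<Phi> j k)"
proof (cases "\<Phi> i k = []")
  case False
  with mt_le_chain[where \<Phi> = \<Phi>, OF assms] show ?thesis by (auto simp: mt_le_def supp_def)
qed simp

lemma prefix_nth: "prefix xs ys \<Longrightarrow> n < length xs \<Longrightarrow> ys ! n = xs ! n"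
  by (auto simp: prefix_def nth_append)

lemma TPhi_eq:
  assumes chain: "\<And>j. mt_le (\<Phi> j) (\<Phi> (Suc j))" and n: "n < length (\<Phi> j k)"
  shows "TPhi \<Phi> k n = \<Phi> j k ! n"
proof -
  have "\<exists>i. n < length (\<Phi> i k) \<and> \<Phi> i k ! n = TPhi \<Phi> k n"
    unfolding TPhi_def by (rule someI_ex) (use n in blast)
  then obtain i where i: "n < length (\<Phi> i k)" "\<Phi> i k ! n = TPhi \<Phi> k n" by blast
  show ?thesis
  proof (cases "i \<le> j")
    case True
    then have "prefix (\<Phi> i k) (\<Phi> j k)" by (rule mt_le_chain_prefix[where \<Phi> = \<Phi>, OF chain])
    from prefix_nth[OF this i(1)] i(2) show ?thesis by simp
  next
    case False
    then have "prefix (\<Phi> j k) (\<Phi> i k)" by (intro mt_le_chain_prefix[where \<Phi> = \<Phi>, OF chain]) simp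
    from prefix_nth[OF this n] i(2) show ?thesis by simp
  qed
qed

lemma supp_update_Cons [simp]: "supp (\<psi>(k := T # Ts)) = insert k (supp \<psi>)"
  unfolding supp_def by auto

lemma MT_update_singleton:
  assumes "\<psi> \<in> MT P" and "T \<in> LC 0 P"
  shows "\<psi>(k := [T]) \<in> MT P"
proof -
  have "LC 0 P \<subseteq> LT" unfolding LC_def by blast
  with assms show ?thesis unfolding MT_def is_multitree_def by auto
qed

lemma D_below_dense:
  assumes "LTF P" and "T \<in> P"
  shows "mt_dense P (D_below P T)"
  unfolding mt_dense_def
proof (intro conjI ballI)
  show "D_below P T \<subseteq> MT P" unfolding D_below_def by auto
next
  fix \<psi> assume \<psi>: "\<psi> \<in> MT P"
  then have "finite (supp \<psi>)" unfolding MT_def is_multitree_def by auto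
  then obtain k where k: "k \<notin> supp \<psi>" using ex_new_if_finite infinite_UNIV_nat by blast
  have "T \<in> LC 0 P" using assms unfolding LTF_def LC_def by auto
  with \<psi> have \<phi>: "\<psi>(k := [T]) \<in> MT P" by (rule MT_update_singleton)
  have "mt_le \<psi> (\<psi>(k := [T]))" using k unfolding mt_le_def by auto
  moreover have "\<psi>(k := [T]) \<in> D_below P T" using \<phi> unfolding D_below_def by auto
  ultimately show "\<exists>\<phi>\<in>D_below P T. mt_le \<psi> \<phi>" by blast
qed

lemma UU_below_P:
  assumes "LTF P"
    and Mset: "\<And>T. T \<in> P \<Longrightarrow> D_below P T \<in> Mset"
    and chain: "\<And>j. mt_le (\<Phi> j) (\<Phi> (Suc j))"
    and generic: "\<And>D. D \<in> Mset \<Longrightarrow> mt_dense P D \<Longrightarrow> \<exists>j. \<Phi> j \<in> D"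
    and "T \<in> P"
  shows "\<exists>U \<in> UU \<Phi>. U \<subseteq> T"
proof -
  have "mt_dense P (D_below P T)" using assms(1,5) by (rule D_below_dense)
  then obtain j where "\<Phi> j \<in> D_below P T" using generic Mset[OF \<open>T \<in> P\<close>] by blast
  then obtain k where k: "0 < length (\<Phi> j k)" "\<Phi> j k ! 0 \<subseteq> T"
    unfolding D_below_def supp_def by auto
  have "UPhi \<Phi> k \<subseteq> TPhi \<Phi> k 0" unfolding UPhi_def by blast
  also have "\<dots> = \<Phi> j k ! 0" using chain k(1) by (rule TPhi_eq)
  also have "\<dots> \<subseteq> T" by (rule k(2))
  finally show ?thesis using UPhi_in_UU by blast
qed

theorem lemma7p3:
  fixes P :: "tree set" and \<Phi> :: "nat \<Rightarrow> multitree"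
    and Mset :: "multitree set set"
  assumes "LTF P"
    and "countable Mset"
    and "\<And>k n. D_len P k n \<in> Mset"
    and "\<And>T. T \<in> P \<Longrightarrow> D_below P T \<in> Mset"
    and "\<And>j. \<Phi> j \<in> MT P"
    and "\<And>j. mt_le (\<Phi> j) (\<Phi> (Suc j))"
    and "\<And>D. D \<in> Mset \<Longrightarrow> mt_dense P D \<Longrightarrow> \<exists>j. \<Phi> j \<in> D"
  shows "(\<forall>T \<in> UU \<Phi> \<union> P. \<exists>U \<in> UU \<Phi>. U \<subseteq> T)
       \<and> (\<forall>(T, T') \<in> E0prod (P \<union> UU \<Phi>). \<exists>(U, U') \<in> E0prod (UU \<Phi>). U \<subseteq> T \<and> U' \<subseteq> T')"
proof -
  have dense: "\<exists>U \<in> UU \<Phi>. U \<subseteq> T" if "T \<in> P \<union> UU \<Phi>" for T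
  proof (cases "T \<in> P")
    case True
    with assms(1,4,6,7) show ?thesis by (rule UU_below_P)
  qed (use that in blast)
  have "\<exists>(U, U') \<in> E0prod (UU \<Phi>). U \<subseteq> T \<and> U' \<subseteq> T'"
    if "(T, T') \<in> E0prod (P \<union> UU \<Phi>)" for T T'
    using sdotT_in_UU dense that by (rule E0prod_dense)
  with dense show ?thesis by blast
qed

end
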